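(* Let $a=(a_{00},a_{01},a_{10},a_{11})$ have strictly positive entries, $a_\triangle=a_{01}+a_{10}$, $a_{++}=a_{00}+a_{01}+a_{10}+a_{11}$, and let $x_{++}\ge0$ be a fixed integer. Let $p_H(\eta)=\mathrm{Beta}(\eta\mid a_\triangle,a_{++}-a_\triangle)$, $p_H(\eta,\theta)=p_H(\eta)\,\mathrm{Beta}(\theta\mid a_{01},a_{10})$, and for imaginary counts $(x_{01},x_{10},x_{++}-x_\triangle)$, $x_\triangle=x_{01}+x_{10}$, multinomial with $x_{++}$ trials and cell probabilities $(\eta\theta,\eta(1-\theta),1-\eta)$, define the intrinsic prior $$p^I_H(\eta,\theta\mid H_0)=p_H(\eta,\theta)\,E_{\eta,\theta}\!\left[\frac{B(a_{01},a_{10})}{2^{x_\triangle}B(a_{01}+x_{01},a_{10}+x_{10})}\right].$$ Then the marginal density of $\eta$ under the intrinsic prior equals the original marginal prior: $p^I_H(\eta\mid H_0)=\int_0^1p^I_H(\eta,\theta\mid H_0)\,d\theta=p_H(\eta)$ for all $\eta\in(0,1)$.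
   Context: $B(A,B)=\int_0^1t^{A-1}(1-t)^{B-1}dt$ is the Beta function and $\mathrm{Beta}(u\mid A,B)=u^{A-1}(1-u)^{B-1}/B(A,B)$ the Beta density. Setting: a $2\times2$ matched-pair table with cell probabilities $\pi\sim\mathrm{Dir}(a)$ under $H$, $\eta=\pi_{01}+\pi_{10}$ (swing probability), $\theta=\pi_{01}/(\pi_{01}+\pi_{10})$; $H_0:\theta=1/2$ with prior on $\eta$ equal to $p_H(\eta)$. The expectation inside the intrinsic prior is the inverse of the default Bayes factor $2^{x_\triangle}B(a_{01}+x_{01},a_{10}+x_{10})/B(a_{01},a_{10})$ of $H$ versus $H_0$ based on $x$. *)

theory Defs
  imports "HOL-Analysis.Analysis"
begin

definition beta_dens :: "real \<Rightarrow> real \<Rightarrow> real \<Rightarrow> real" where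
  "beta_dens u A B = u powr (A - 1) * (1 - u) powr (B - 1) / Beta A B"

definition trinom_pmf :: "nat \<Rightarrow> nat \<Rightarrow> nat \<Rightarrow> real \<Rightarrow> real \<Rightarrow> real" where
  "trinom_pmf n i j p q =
     fact n / (fact i * fact j * fact (n - i - j)) * p ^ i * q ^ j * (1 - p - q) ^ (n - i - j)"

definition intrinsic_prior :: "real \<Rightarrow> real \<Rightarrow> real \<Rightarrow> real \<Rightarrow> nat \<Rightarrow> real \<Rightarrow> real \<Rightarrow> real" where
  "intrinsic_prior a00 a01 a10 a11 n \<eta> \<theta> =
     (let aT = a01 + a10; app = a00 + a01 + a10 + a11 in
      beta_dens \<eta> aT (app - aT) * beta_dens \<theta> a01 a10 *
      (\<Sum>(i, j) \<in> {(i, j). i + j \<le> n}.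
         trinom_pmf n i j (\<eta> * \<theta>) (\<eta> * (1 - \<theta>)) *
         (Beta a01 a10 / (2 ^ (i + j) * Beta (a01 + real i) (a10 + real j)))))"

end

theory Submission
  imports Defs
begin

text \<open>Integrating out \<theta> term by term: since \<eta>\<theta> and \<eta>(1 - \<theta>) are the cell probabilities
  (\<eta>/2)(2\<theta>) and (\<eta>/2)(2(1 - \<theta>)), the factor 2^(i+j) cancels, and the remaining
  \<theta>-dependence of the (i,j) summand is Beta(\<theta> | a01, a10) \<theta>^i (1 - \<theta>)^j B(a01,a10)/B(a01+i,a10+j),
  which is the Beta(a01+i, a10+j) density and integrates to 1. What is left is
  p_H(\<eta>) times the total mass of the trinomial distribution with cell probabilities
  (\<eta>/2, \<eta>/2, 1 - \<eta>), which is 1.\<close>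

lemma Beta_pos: "a > 0 \<Longrightarrow> b > (0::real) \<Longrightarrow> Beta a b > 0"
  by (simp add: Beta_def)

lemma beta_dens_has_integral:
  assumes "A > 0" "B > 0"
  shows "((\<lambda>u. beta_dens u A B) has_integral 1) {0..1}"
proof -
  have "((\<lambda>u. u powr (A - 1) * (1 - u) powr (B - 1) / Beta A B) has_integral Beta A B / Beta A B) {0..1}"
    by (intro has_integral_divide has_integral_Beta_real assms)
  then show ?thesis
    using Beta_pos[OF assms] by (simp add: beta_dens_def)
qed

lemma beta_dens_mult_powers:
  assumes "A > 0" "B > 0" "0 < u" "u < 1"
  shows "beta_dens u A B * u ^ i * (1 - u) ^ j * Beta A B / Beta (A + real i) (B + real j)
           = beta_dens u (A + real i) (B + real j)"
proof -
  have "Beta A B > 0" "Beta (A + real i) (B + real j) > 0"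
    using assms by (simp_all add: Beta_pos add_pos_nonneg)
  then have "beta_dens u A B * u ^ i * (1 - u) ^ j * Beta A B / Beta (A + real i) (B + real j)
      = (u powr (A - 1) * u ^ i) * ((1 - u) powr (B - 1) * (1 - u) ^ j) / Beta (A + real i) (B + real j)"
    by (simp add: beta_dens_def)
  also have "\<dots> = beta_dens u (A + real i) (B + real j)"
    using assms
    by (simp add: beta_dens_def powr_realpow[symmetric] powr_add[symmetric] algebra_simps)
  finally show ?thesis .
qed

lemma trinom_pmf_eq_binomials:
  assumes "i \<le> k" "k \<le> n"
  shows "trinom_pmf n i (k - i) p q
           = real (n choose k) * real (k choose i) * p ^ i * q ^ (k - i) * (1 - p - q) ^ (n - k)"
proof -
  have "real (n choose k) * real (k choose i)
        = fact n / (fact k * fact (n - k)) * (fact k / (fact i * fact (k - i)))"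
    using assms by (simp add: binomial_fact)
  also have "\<dots> = fact n / (fact i * fact (k - i) * fact (n - k))"
    by (simp add: field_simps)
  finally have coeff: "fact n / (fact i * fact (k - i) * fact (n - k))
                         = real (n choose k) * real (k choose i)" ..
  have last_count: "n - i - (k - i) = n - k"
    using assms by simp
  show ?thesis
    unfolding trinom_pmf_def last_count coeff ..
qed

lemma trinom_pmf_sum_eq_1: "(\<Sum>(i, j) \<in> {(i, j). i + j \<le> n}. trinom_pmf n i j p q) = 1"
proof -
  have "(\<Sum>(i, j) \<in> {(i, j). i + j \<le> n}. trinom_pmf n i j p q)
        = (\<Sum>k\<le>n. \<Sum>i\<le>k. trinom_pmf n i (k - i) p q)"
    by (rule sum.triangle_reindex_eq)
  also have "\<dots> = (\<Sum>k\<le>n. \<Sum>i\<le>k. real (n choose k) * (real (k choose i) * p ^ i * q ^ (k - i))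
                                 * (1 - p - q) ^ (n - k))"
    by (intro sum.cong refl) (simp add: trinom_pmf_eq_binomials)
  also have "\<dots> = (\<Sum>k\<le>n. real (n choose k) * (\<Sum>i\<le>k. real (k choose i) * p ^ i * q ^ (k - i))
                              * (1 - p - q) ^ (n - k))"
    by (simp add: sum_distrib_left sum_distrib_right)
  also have "\<dots> = (\<Sum>k\<le>n. real (n choose k) * (p + q) ^ k * (1 - p - q) ^ (n - k))"
    by (simp add: binomial_ring)
  also have "\<dots> = ((p + q) + (1 - p - q)) ^ n"
    by (rule binomial_ring[symmetric])
  finally show ?thesis
    by simp
qed

lemma trinom_pmf_split_cells:
  "trinom_pmf n i j (\<eta> * \<theta>) (\<eta> * (1 - \<theta>))
     = trinom_pmf n i j (\<eta> / 2) (\<eta> / 2) * 2 ^ (i + j) * \<theta> ^ i * (1 - \<theta>) ^ j"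
proof -
  have last_cell: "1 - \<eta> * \<theta> - \<eta> * (1 - \<theta>) = 1 - \<eta> / 2 - \<eta> / 2"
    by (simp add: algebra_simps)
  show ?thesis
    unfolding trinom_pmf_def last_cell by (simp add: power_mult_distrib power_divide power_add mult_ac)
qed

lemma intrinsic_prior_eq_mixture:
  assumes "a01 > 0" "a10 > 0" "0 < \<theta>" "\<theta> < 1"
  shows "intrinsic_prior a00 a01 a10 a11 n \<eta> \<theta>
           = beta_dens \<eta> (a01 + a10) ((a00 + a01 + a10 + a11) - (a01 + a10)) *
             (\<Sum>(i, j) \<in> {(i, j). i + j \<le> n}.
                trinom_pmf n i j (\<eta> / 2) (\<eta> / 2) * beta_dens \<theta> (a01 + real i) (a10 + real j))"
  unfolding intrinsic_prior_def Let_def sum_distrib_left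
proof (intro sum.cong refl, clarify)
  fix i j :: nat
  show "beta_dens \<eta> (a01 + a10) (a00 + a01 + a10 + a11 - (a01 + a10)) * beta_dens \<theta> a01 a10 *
          (trinom_pmf n i j (\<eta> * \<theta>) (\<eta> * (1 - \<theta>)) *
           (Beta a01 a10 / (2 ^ (i + j) * Beta (a01 + real i) (a10 + real j))))
        = beta_dens \<eta> (a01 + a10) (a00 + a01 + a10 + a11 - (a01 + a10)) *
          (trinom_pmf n i j (\<eta> / 2) (\<eta> / 2) * beta_dens \<theta> (a01 + real i) (a10 + real j))"
    unfolding trinom_pmf_split_cells beta_dens_mult_powers[OF assms, of i j, symmetric]
    by (simp add: field_simps)
qed

theorem proposition8:
  fixes a00 a01 a10 a11 \<eta> :: real and n :: nat
  assumes "a00 > 0" "a01 > 0" "a10 > 0" "a11 > 0"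
    and "0 < \<eta>" "\<eta> < 1"
  shows "((\<lambda>\<theta>. intrinsic_prior a00 a01 a10 a11 n \<eta> \<theta>) has_integral
           beta_dens \<eta> (a01 + a10) ((a00 + a01 + a10 + a11) - (a01 + a10))) {0..1}"
proof -
  define p\<^sub>H where "p\<^sub>H = beta_dens \<eta> (a01 + a10) ((a00 + a01 + a10 + a11) - (a01 + a10))"
  define S where "S = {(i::nat, j::nat). i + j \<le> n}"
  have "finite S"
    by (rule finite_subset[of _ "{..n} \<times> {..n}"]) (auto simp: S_def)
  moreover have "((\<lambda>\<theta>. trinom_pmf n i j (\<eta> / 2) (\<eta> / 2) * beta_dens \<theta> (a01 + real i) (a10 + real j))
                   has_integral trinom_pmf n i j (\<eta> / 2) (\<eta> / 2)) {0..1}" for i j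
    using has_integral_mult_right[OF beta_dens_has_integral, of "a01 + real i" "a10 + real j"] assms
    by (simp add: add_pos_nonneg)
  ultimately have "((\<lambda>\<theta>. p\<^sub>H * (\<Sum>(i, j) \<in> S. trinom_pmf n i j (\<eta> / 2) (\<eta> / 2) *
                 beta_dens \<theta> (a01 + real i) (a10 + real j)))
             has_integral p\<^sub>H * (\<Sum>(i, j) \<in> S. trinom_pmf n i j (\<eta> / 2) (\<eta> / 2))) {0..1}"
    by (intro has_integral_mult_right has_integral_sum) auto
  then have "((\<lambda>\<theta>. p\<^sub>H * (\<Sum>(i, j) \<in> S. trinom_pmf n i j (\<eta> / 2) (\<eta> / 2) *
                 beta_dens \<theta> (a01 + real i) (a10 + real j))) has_integral p\<^sub>H) {0..1}"
    using trinom_pmf_sum_eq_1[of n "\<eta> / 2" "\<eta> / 2"] by (simp add: S_def)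
  \<comment> \<open>The mixture form is only valid on the open interval, since \<open>0 powr a = 0\<close>.\<close>
  then show ?thesis
    unfolding p\<^sub>H_def[symmetric]
    by (rule has_integral_spike_finite[of "{0, 1}", rotated 2])
       (auto simp: S_def p\<^sub>H_def intrinsic_prior_eq_mixture assms)
qed

end
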